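(* Let $\mathcal G\subseteq\mathcal F$ be a sub-$\sigma$-algebra and let $Z\in L_p(\Omega,\mathcal F,P)$ be such that the conditional distributionally robust functional $\mathcal R_{|\mathcal G}(Z)$ belongs to $L_p(\Omega,\mathcal F,P)$. Then $$\mathcal R(Z)\le \mathcal R\big(\mathcal R_{|\mathcal G}(Z)\big).$$
   Context: Let $(\Omega,\mathcal F,P)$ be a probability space, $p\in[1,\infty)$, $1/p+1/q=1$, and $\mathcal Z=L_p(\Omega,\mathcal F,P)$. Let $\mathfrak M$ be a nonempty set of probability measures $Q$ on $(\Omega,\mathcal F)$ with $Q\ll P$ and $dQ/dP\in L_q(\Omega,\mathcal F,P)$, and define $\mathcal R(Z)=\sup_{Q\in\mathfrak M}\mathbb E_Q[Z]$ for $Z\in\mathcal Z$ (assumed finite). Relations $X\preceq Y$ between random variables mean $X\le Y$ $P$-almost surely; essential suprema/infima are taken with respect to $P$. For a probability measure $Q$ and sub-$\sigma$-algebra $\mathcal G$, $\operatorname{ess\,inf}\mathbb E_{Q|\mathcal G}[Z]$ denotes the essential infimum (w.r.t. $P$) of the set of all versions of the conditional expectation of $Z$ given $\mathcal G$ under $Q$ (i.e., all $\mathcal G$-measurable $Y$ with $\int_B Y\,dQ=\int_B Z\,dQ$ for all $B\in\mathcal G$); it equals $-\infty$ on sets $A\in\mathcal G$ with $Q(A)=0<P(A)$. The conditional distributionally robust functional $\mathcal R_{|\mathcal G}(Z)$ is the $\mathcal G$-measurable extended-real function (unique up to $P$-null sets) such that (i) $\operatorname{ess\,inf}\mathbb E_{Q|\mathcal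 G}[Z]\preceq \mathcal R_{|\mathcal G}(Z)$ for every $Q\in\mathfrak M$, and (ii) whenever $Y$ is $\mathcal G$-measurable with $\operatorname{ess\,inf}\mathbb E_{Q|\mathcal G}[Z]\preceq Y$ for all $Q\in\mathfrak M$, then $\mathcal R_{|\mathcal G}(Z)\preceq Y$. That is, $\mathcal R_{|\mathcal G}(Z)=\operatorname{ess\,sup}_{Q\in\mathfrak M}\mathbb E_{Q|\mathcal G}[Z]$. *)

theory Defs
  imports "HOL-Probability.Probability"
begin

definition memLp :: "'a measure \<Rightarrow> real \<Rightarrow> ('a \<Rightarrow> real) \<Rightarrow> bool" where
  "memLp M p f \<longleftrightarrow> f \<in> borel_measurable M \<and> integrable M (\<lambda>x. \<bar>f x\<bar> powr p)"

text \<open>Membership in the dual space L_q(M), 1/p + 1/q = 1 (q = \<infinity> when p = 1).\<close>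
definition memLq_dual :: "'a measure \<Rightarrow> real \<Rightarrow> ('a \<Rightarrow> real) \<Rightarrow> bool" where
  "memLq_dual M p f \<longleftrightarrow> f \<in> borel_measurable M \<and>
     (if p = 1 then (\<exists>C. AE x in M. \<bar>f x\<bar> \<le> C)
      else integrable M (\<lambda>x. \<bar>f x\<bar> powr (p / (p - 1))))"

definition admissible_ambiguity :: "'a measure \<Rightarrow> real \<Rightarrow> 'a measure set \<Rightarrow> bool" where
  "admissible_ambiguity M p \<MM> \<longleftrightarrow> \<MM> \<noteq> {} \<and>
     (\<forall>Q\<in>\<MM>. prob_space Q \<and> sets Q = sets M \<and> absolutely_continuous M Q \<and>
              memLq_dual M p (\<lambda>x. enn2real (RN_deriv M Q x)))"

definition DR :: "'a measure set \<Rightarrow> ('a \<Rightarrow> real) \<Rightarrow> ereal" where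
  "DR \<MM> Z = (SUP Q\<in>\<MM>. ereal (integral\<^sup>L Q Z))"

definition cond_exp_versions :: "'a measure \<Rightarrow> 'a measure \<Rightarrow> ('a \<Rightarrow> real) \<Rightarrow> ('a \<Rightarrow> real) set" where
  "cond_exp_versions Q G Z = {Y. Y \<in> borel_measurable G \<and> integrable Q Y \<and>
      (\<forall>B\<in>sets G. set_lebesgue_integral Q B Y = set_lebesgue_integral Q B Z)}"

definition is_ess_inf :: "'a measure \<Rightarrow> 'a measure \<Rightarrow> ('a \<Rightarrow> real) set \<Rightarrow> ('a \<Rightarrow> ereal) \<Rightarrow> bool" where
  "is_ess_inf M G S h \<longleftrightarrow> h \<in> borel_measurable G \<and>
     (\<forall>Y\<in>S. AE x in M. h x \<le> ereal (Y x)) \<and>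
     (\<forall>h'\<in>borel_measurable G. (\<forall>Y\<in>S. AE x in M. h' x \<le> ereal (Y x)) \<longrightarrow> (AE x in M. h' x \<le> h x))"

text \<open>RG is (a version of) the conditional distributionally robust functional R_{|G}(Z),
  i.e. the essential supremum over Q of ess inf E_{Q|G}[Z].\<close>
definition is_cond_DR :: "'a measure \<Rightarrow> 'a measure \<Rightarrow> 'a measure set \<Rightarrow> ('a \<Rightarrow> real) \<Rightarrow> ('a \<Rightarrow> ereal) \<Rightarrow> bool" where
  "is_cond_DR M G \<MM> Z RG \<longleftrightarrow> RG \<in> borel_measurable G \<and>
     (\<forall>Q\<in>\<MM>. \<forall>h. is_ess_inf M G (cond_exp_versions Q G Z) h \<longrightarrow> (AE x in M. h x \<le> RG x)) \<and>
     (\<forall>Y\<in>borel_measurable G.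
        (\<forall>Q\<in>\<MM>. \<forall>h. is_ess_inf M G (cond_exp_versions Q G Z) h \<longrightarrow> (AE x in M. h x \<le> Y x))
        \<longrightarrow> (AE x in M. RG x \<le> Y x))"

end

theory Submission
  imports Defs
begin

text \<open>For each Q in the ambiguity set, the essential infimum of all versions of E_Q[Z | G] can be
  realised as -\<infinity> on a Q-null set N in G that is largest up to P-null sets, and as the conditional
  expectation off N; so it agrees Q-a.e. with a version of E_Q[Z | G]. It lies below R_G(Z)
  P-a.e., hence Q-a.e., and the tower property gives E_Q[Z] \<le> E_Q[R_G(Z)]; then take the supremum
  over Q. Integrability under Q of L_p variables follows from Young's inequality with dQ/dP in L_q.\<close>

lemma integrable_mult_memLp_memLq_dual:
  assumes "p \<ge> 1" "memLp M p f" "memLq_dual M p g"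
  shows "integrable M (\<lambda>x. g x * f x)"
proof -
  have [measurable]: "f \<in> borel_measurable M" "g \<in> borel_measurable M"
    and f: "integrable M (\<lambda>x. \<bar>f x\<bar> powr p)"
    using assms(2,3) unfolding memLp_def memLq_dual_def by auto
  show ?thesis
  proof (cases "p = 1")
    case True
    then obtain C where C: "AE x in M. \<bar>g x\<bar> \<le> C"
      using assms(3) unfolding memLq_dual_def by auto
    show ?thesis
    proof (rule Bochner_Integration.integrable_bound)
      show "integrable M (\<lambda>x. C * \<bar>f x\<bar>)" using f True by simp
      show "AE x in M. norm (g x * f x) \<le> norm (C * \<bar>f x\<bar>)"
        using C by eventually_elim (auto simp: abs_mult intro: mult_right_mono order_trans[OF _ abs_ge_self])
    qed simp
  next
    case False
    define q where "q = p / (p - 1)"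
    have p: "p > 1" and q: "q > 1" "1/p + 1/q = 1"
      using assms(1) False by (auto simp: q_def field_simps)
    have g: "integrable M (\<lambda>x. \<bar>g x\<bar> powr q)"
      using assms(3) False unfolding memLq_dual_def q_def by auto
    show ?thesis
    proof (rule Bochner_Integration.integrable_bound)
      show "integrable M (\<lambda>x. \<bar>f x\<bar> powr p / p + \<bar>g x\<bar> powr q / q)" using f g by simp
      show "AE x in M. norm (g x * f x) \<le> norm (\<bar>f x\<bar> powr p / p + \<bar>g x\<bar> powr q / q)"
      proof (intro AE_I2)
        fix x
        have "\<bar>f x\<bar> * \<bar>g x\<bar> \<le> \<bar>f x\<bar> powr p / p + \<bar>g x\<bar> powr q / q"
          using Youngs_inequality[OF p q] by simp
        then show "norm (g x * f x) \<le> norm (\<bar>f x\<bar> powr p / p + \<bar>g x\<bar> powr q / q)"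
          by (simp add: abs_mult mult.commute)
      qed
    qed simp
  qed
qed

lemma (in sigma_finite_measure) integrable_memLp_admissible_ambiguity:
  assumes "p \<ge> 1" "admissible_ambiguity M p \<MM>" "Q \<in> \<MM>" "memLp M p f"
  shows "integrable Q f"
proof -
  have Q: "prob_space Q" "sets Q = sets M" "absolutely_continuous M Q"
    and d: "memLq_dual M p (\<lambda>x. enn2real (RN_deriv M Q x))"
    using assms(2,3) unfolding admissible_ambiguity_def by auto
  have "f \<in> borel_measurable M" using assms(4) unfolding memLp_def by simp
  then show ?thesis
    using RN_deriv_integrable[OF prob_space_imp_sigma_finite[OF Q(1)] Q(3,2)]
      integrable_mult_memLp_memLq_dual[OF assms(1,4) d] by simp
qed

lemma (in finite_measure) exists_maximal_null_set:
  assumes GM: "sets G \<subseteq> sets M" and GQ: "sets G \<subseteq> sets Q"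
  shows "\<exists>N\<in>sets G. N \<in> null_sets Q \<and> (\<forall>B\<in>sets G. B \<in> null_sets Q \<longrightarrow> B - N \<in> null_sets M)"
proof -
  define S where "S = measure M ` {B \<in> sets G. B \<in> null_sets Q}"
  have S: "S \<noteq> {}" "bdd_above S"
    unfolding S_def by (auto intro!: image_eqI[of _ _ "{}"] bdd_aboveI[of _ "measure M (space M)"]
        bounded_measure)
  have "\<exists>B. B \<in> sets G \<and> B \<in> null_sets Q \<and> Sup S - 1 / Suc n < measure M B" for n :: nat
    using less_cSup_iff[OF S, of "Sup S - 1 / Suc n"] unfolding S_def by auto
  then obtain Bs where Bs: "\<And>n. Bs n \<in> sets G" "\<And>n. Bs n \<in> null_sets Q"
      and Bs_large: "\<And>n. Sup S - 1 / Suc n < measure M (Bs n)"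
    by metis
  define N where "N = (\<Union>n. Bs n)"
  have N: "N \<in> sets G" "N \<in> null_sets Q"
    unfolding N_def using Bs by auto
  show ?thesis
  proof (intro bexI[OF _ N(1)] conjI N(2) ballI impI)
    fix B assume B: "B \<in> sets G" "B \<in> null_sets Q"
    have upper: "measure M (N \<union> B) \<le> Sup S"
      using N B S(2) unfolding S_def by (intro cSup_upper) auto
    have split: "measure M (N \<union> B) = measure M N + measure M (B - N)"
      using N B GM by (subst finite_measure_Union[symmetric]) (auto intro: arg_cong[where f="measure M"])
    have mono: "measure M (Bs n) \<le> measure M N" for n
      using N Bs GM unfolding N_def by (intro finite_measure_mono) auto
    have "measure M (B - N) < 1 / Suc n" for n
      using upper split mono[of n] Bs_large[of n] by linarith
    then have "measure M (B - N) = 0"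
      using measure_nonneg[of M "B - N"] reals_Archimedean[of "measure M (B - N)"]
      by (metis inverse_eq_divide order_less_asym' order_neq_le_trans)
    then show "B - N \<in> null_sets M"
      using N B GM by (auto simp: null_sets_def emeasure_eq_measure)
  qed
qed

context sigma_finite_subalgebra
begin

lemma real_cond_exp_in_cond_exp_versions:
  assumes "integrable M Z"
  shows "real_cond_exp M F Z \<in> cond_exp_versions M F Z"
  using assms real_cond_exp_intA[OF assms] by (auto simp: cond_exp_versions_def)

lemma cond_exp_versions_AE_eq:
  assumes "integrable M Z" "Y \<in> cond_exp_versions M F Z"
  shows "AE x in M. real_cond_exp M F Z x = Y x"
  using assms by (intro real_cond_exp_charact) (auto simp: cond_exp_versions_def)

lemma cond_exp_versions_diff_null_set:
  assumes Y: "Y \<in> cond_exp_versions M F Z" and N: "N \<in> sets F" "N \<in> null_sets M"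
  shows "(\<lambda>x. Y x - c * indicator N x) \<in> cond_exp_versions M F Z"
proof -
  have [measurable]: "Y \<in> borel_measurable F" "N \<in> sets F" and Yi: "integrable M Y"
    using Y N unfolding cond_exp_versions_def by auto
  then have Yc: "integrable M (\<lambda>x. Y x - c * indicator N x)"
    using N(2) by (auto simp: null_sets_def)
  have "set_lebesgue_integral M B (\<lambda>x. Y x - c * indicator N x) = set_lebesgue_integral M B Y"
    if "B \<in> sets F" for B
    using that Yi Yc AE_not_in[OF N(2)] subalg
    by (intro set_lebesgue_integral_cong_AE) (auto simp: indicator_def subalgebra_def)
  with Yc Y show ?thesis
    unfolding cond_exp_versions_def by auto
qed


lemma real_cond_exp_le_cond_exp_versions_off_null:
  assumes P: "sets P = sets M" and N: "N \<in> sets F"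
    and N_max: "\<forall>B\<in>sets F. B \<in> null_sets M \<longrightarrow> B - N \<in> null_sets P"
    and Z: "integrable M Z" and Y: "Y \<in> cond_exp_versions M F Z"
  shows "AE x in P. x \<notin> N \<longrightarrow> real_cond_exp M F Z x \<le> Y x"
proof -
  have [measurable]: "Y \<in> borel_measurable F"
    using Y unfolding cond_exp_versions_def by simp
  define B where "B = {x \<in> space F. Y x < real_cond_exp M F Z x}"
  have B: "B \<in> sets F"
    unfolding B_def by measurable
  then have "B \<in> sets M"
    using subalg by (auto simp: subalgebra_def)
  have "AE x in M. x \<notin> B"
    using cond_exp_versions_AE_eq[OF Z Y] by eventually_elim (auto simp: B_def)
  then have "B - N \<in> null_sets P"
    using N_max B \<open>B \<in> sets M\<close> by (simp add: AE_iff_null_sets)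
  then show ?thesis
  proof (rule AE_mp[OF AE_not_in AE_I2], intro impI)
    fix x assume "x \<in> space P" "x \<notin> B - N" "x \<notin> N"
    then show "real_cond_exp M F Z x \<le> Y x"
      using subalg sets_eq_imp_space_eq[OF P] by (auto simp: B_def subalgebra_def not_less)
  qed
qed

lemma lower_bound_cond_exp_versions_le_ess_inf:
  assumes N: "N \<in> sets F" "N \<in> null_sets M" and Z: "integrable M Z"
    and h': "\<forall>Y\<in>cond_exp_versions M F Z. AE x in P. h' x \<le> ereal (Y x)"
  shows "AE x in P. h' x \<le> (if x \<in> N then -\<infinity> else ereal (real_cond_exp M F Z x))"
proof -
  let ?Yn = "\<lambda>(n::nat) x. real_cond_exp M F Z x - real n * indicator N x"
  have "?Yn n \<in> cond_exp_versions M F Z" for n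
    using cond_exp_versions_diff_null_set[OF real_cond_exp_in_cond_exp_versions[OF Z] N] .
  then have "AE x in P. \<forall>n. h' x \<le> ereal (?Yn n x)"
    using h' by (simp add: AE_all_countable)
  then show ?thesis
  proof eventually_elim
    case (elim x)
    show ?case
    proof (cases "x \<in> N")
      case True
      have le: "h' x \<le> ereal (real_cond_exp M F Z x - real n)" for n
        using elim[rule_format, of n] True by simp
      have "h' x = -\<infinity>"
      proof (cases "h' x")
        case (real r)
        obtain n :: nat where "real_cond_exp M F Z x - r < n"
          using reals_Archimedean2 by blast
        then show ?thesis
          using le[of n] real by simp
      qed (use le[of 0] in auto)
      with True show ?thesis by simp
    qed (use elim[rule_format, of 0] in simp)
  qed
qed


lemma is_ess_inf_cond_exp_versions:
  assumes P: "finite_measure P" "sets P = sets M" and Z: "integrable M Z"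
  shows "\<exists>h. is_ess_inf P F (cond_exp_versions M F Z) h \<and>
    (AE x in M. h x = ereal (real_cond_exp M F Z x))"
proof -
  obtain N where N: "N \<in> sets F" "N \<in> null_sets M"
    and N_max: "\<forall>B\<in>sets F. B \<in> null_sets M \<longrightarrow> B - N \<in> null_sets P"
    using finite_measure.exists_maximal_null_set[OF P(1), of F M] subalg P(2)
    by (auto simp: subalgebra_def)
  define h where "h x = (if x \<in> N then -\<infinity> else ereal (real_cond_exp M F Z x))" for x
  have "h \<in> borel_measurable F"
    unfolding h_def using N(1) by measurable
  moreover have "AE x in P. h x \<le> ereal (Y x)" if "Y \<in> cond_exp_versions M F Z" for Y
    using real_cond_exp_le_cond_exp_versions_off_null[OF P(2) N(1) N_max Z that]
    by eventually_elim (simp add: h_def)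
  moreover have "AE x in M. h x = ereal (real_cond_exp M F Z x)"
    using AE_not_in[OF N(2)] by eventually_elim (simp add: h_def)
  ultimately show ?thesis
    using lower_bound_cond_exp_versions_le_ess_inf[OF N Z] unfolding is_ess_inf_def h_def[symmetric]
    by blast
qed

end

lemma integral_le_integral_cond_DR:
  assumes P: "prob_space P" and p: "p \<ge> 1" and adm: "admissible_ambiguity P p \<MM>"
    and G: "subalgebra P G" and Z: "memLp P p Z" and RG: "is_cond_DR P G \<MM> Z RG"
    and RG_finite: "AE x in P. \<bar>RG x\<bar> \<noteq> \<infinity>"
    and RG_Lp: "memLp P p (\<lambda>x. real_of_ereal (RG x))" and Q: "Q \<in> \<MM>"
  shows "integral\<^sup>L Q Z \<le> integral\<^sup>L Q (\<lambda>x. real_of_ereal (RG x))"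
proof -
  interpret P: prob_space P by fact
  have PQ: "prob_space Q" "sets Q = sets P" "absolutely_continuous P Q"
    using adm Q unfolding admissible_ambiguity_def by auto
  have "subalgebra Q G"
    using G PQ(2) sets_eq_imp_space_eq[OF PQ(2)] by (simp add: subalgebra_def)
  then interpret Q: sigma_finite_subalgebra Q G
    using prob_space.finite_measure[OF PQ(1)]
    by (intro finite_measure_subalgebra_is_sigma_finite) (simp add: finite_measure_subalgebra_def
        finite_measure_subalgebra_axioms_def)
  have ZQ: "integrable Q Z" and RGQ: "integrable Q (\<lambda>x. real_of_ereal (RG x))"
    using P.integrable_memLp_admissible_ambiguity[OF p adm Q] Z RG_Lp by auto
  obtain h where h: "is_ess_inf P G (cond_exp_versions Q G Z) h"
    and h_eq: "AE x in Q. h x = ereal (real_cond_exp Q G Z x)"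
    using Q.is_ess_inf_cond_exp_versions[OF P.finite_measure_axioms PQ(2)[symmetric] ZQ] by blast
  have "AE x in P. h x \<le> RG x \<and> \<bar>RG x\<bar> \<noteq> \<infinity>"
    using RG Q h RG_finite unfolding is_cond_DR_def by auto
  then have "AE x in Q. h x \<le> RG x \<and> \<bar>RG x\<bar> \<noteq> \<infinity>"
    by (rule absolutely_continuous_AE[OF PQ(2,3)])
  with h_eq have "AE x in Q. real_cond_exp Q G Z x \<le> real_of_ereal (RG x)"
  proof eventually_elim
    case (elim x)
    then show ?case by (cases "RG x") auto
  qed
  then have "integral\<^sup>L Q (real_cond_exp Q G Z) \<le> integral\<^sup>L Q (\<lambda>x. real_of_ereal (RG x))"
    using ZQ RGQ by (intro integral_mono_AE) auto
  then show ?thesis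
    using Q.real_cond_exp_int(2)[OF ZQ] by simp
qed

theorem proposition3p6:
  fixes M G :: "'a measure" and p :: real and \<MM> :: "'a measure set"
    and Z :: "'a \<Rightarrow> real" and RG :: "'a \<Rightarrow> ereal"
  assumes "prob_space M"
    and "p \<ge> 1"
    and "admissible_ambiguity M p \<MM>"
    and "\<forall>W. memLp M p W \<longrightarrow> DR \<MM> W < \<infinity>"
    and "subalgebra M G"
    and "memLp M p Z"
    and "is_cond_DR M G \<MM> Z RG"
    and "AE x in M. \<bar>RG x\<bar> \<noteq> \<infinity>"
    and "memLp M p (\<lambda>x. real_of_ereal (RG x))"
  shows "DR \<MM> Z \<le> DR \<MM> (\<lambda>x. real_of_ereal (RG x))"
  unfolding DR_def
  using integral_le_integral_cond_DR[OF assms(1-3,5-9)] by (intro SUP_mono) auto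

end
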